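(* Let $g$ be a non-negative concave (differentiable) function on $(0,\infty)$ and fix $x>0$. Define $E(\alpha)=g(\alpha)\,g(x/\alpha)$ for $\alpha>0$. Suppose $\lim_{\alpha\to0^+}E(\alpha)=\lim_{\alpha\to+\infty}E(\alpha)=0$ and that $T_0(t)=t g'(t)/g(t)$ is one-to-one on $(0,\infty)$. Then $E$ attains its unique global maximum at $\alpha=\sqrt{x}$. *)

theory Defs
  imports "HOL-Analysis.Analysis"
begin

end

theory Submission
  imports Defs
begin

text \<open>
  Since \<open>E\<close> is continuous, positive at \<open>\<surd>x\<close> and tends to \<open>0\<close>
  at both ends of \<open>(0, \<infinity>)\<close>, it attains a global maximum at some \<open>m > 0\<close>. A nonnegative concave
  function vanishing somewhere in \<open>(0, \<infinity>)\<close> vanishes identically, which injectivity of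
  \<open>T\<^sub>0 t = t g'(t) / g(t)\<close> forbids; so \<open>g > 0\<close>, and \<open>E' m = 0\<close> becomes \<open>T\<^sub>0 m = T\<^sub>0 (x / m)\<close>.
  Injectivity then forces \<open>m = x / m\<close>, i.e. every maximiser equals \<open>\<surd>x\<close>.
\<close>

lemma concave_on_nonneg_zero_at_combination:
  fixes g :: "real \<Rightarrow> real"
  assumes conc: "concave_on S g" and nonneg: "\<And>y. y \<in> S \<Longrightarrow> g y \<ge> 0"
    and "s \<in> S" "u \<in> S" "0 \<le> v" "v < 1"
    and zero: "g ((1 - v) * s + v * u) = 0"
  shows "g s = 0"
proof -
  have "(1 - v) * g s + v * g u \<le> 0"
    using concave_onD[OF conc, of v s u] zero assms(3-6) by simp
  moreover have "v * g u \<ge> 0" using nonneg[of u] assms(4,5) by simp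
  ultimately have "(1 - v) * g s \<le> 0" by linarith
  then show ?thesis using nonneg[of s] assms(3,6) by (simp add: mult_le_0_iff)
qed

lemma concave_on_pos_reals_nonneg_zero:
  fixes g :: "real \<Rightarrow> real"
  assumes conc: "concave_on {0<..} g" and nonneg: "\<And>y. y > 0 \<Longrightarrow> g y \<ge> 0"
    and "t > 0" "g t = 0" "s > 0"
  shows "g s = 0"
proof (cases "s \<le> t")
  case True
  have "(1 - 1/2) * s + 1/2 * (2 * t - s) = t" by (simp add: field_simps)
  then show ?thesis
    using concave_on_nonneg_zero_at_combination[OF conc, of s "2 * t - s" "1/2"] nonneg True assms(3-5)
    by simp
next
  case False
  define v where "v = (s - t) / (s - t / 2)"
  have "v * (s - t / 2) = s - t" using False assms(3) unfolding v_def by simp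
  then have "(1 - v) * s + v * (t / 2) = t" by (simp add: algebra_simps)
  moreover have "0 \<le> v" "v < 1" using False assms(3) unfolding v_def by (auto simp: field_simps)
  ultimately show ?thesis
    using concave_on_nonneg_zero_at_combination[OF conc, of s "t / 2" v] nonneg assms(3-5) by simp
qed

lemma concave_on_pos_reals_pos:
  fixes g :: "real \<Rightarrow> real"
  assumes conc: "concave_on {0<..} g" and nonneg: "\<And>y. y > 0 \<Longrightarrow> g y \<ge> 0"
    and "s > 0" "g s \<noteq> 0" "t > 0"
  shows "g t > 0"
  using concave_on_pos_reals_nonneg_zero[OF conc nonneg \<open>t > 0\<close> _ \<open>s > 0\<close>] nonneg[OF \<open>t > 0\<close>]
    \<open>g s \<noteq> 0\<close> by force

lemma has_real_derivative_mult_reflect: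
  fixes g :: "real \<Rightarrow> real"
  assumes "(g has_real_derivative D) (at a)" "(g has_real_derivative D') (at (x / a))" "a \<noteq> 0"
  shows "((\<lambda>a. g a * g (x / a)) has_real_derivative D * g (x / a) - g a * D' * x / a\<^sup>2) (at a)"
proof -
  have "((\<lambda>a. x / a) has_real_derivative - x / a\<^sup>2) (at a)"
    using \<open>a \<noteq> 0\<close> by (auto intro!: derivative_eq_intros simp: power2_eq_square)
  from DERIV_chain2[OF assms(2) this]
  have "((\<lambda>a. g (x / a)) has_real_derivative D' * (- x / a\<^sup>2)) (at a)" .
  from DERIV_mult[OF assms(1) this] show ?thesis by (simp add: algebra_simps)
qed

lemma max_mult_reflect_balance:
  fixes g :: "real \<Rightarrow> real"
  assumes diff: "\<And>t. t > 0 \<Longrightarrow> g differentiable (at t)" and pos: "\<And>t. t > 0 \<Longrightarrow> g t > 0"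
    and "x > 0" "m > 0"
    and max: "\<And>y. y > 0 \<Longrightarrow> g y * g (x / y) \<le> g m * g (x / m)"
  shows "m * deriv g m / g m = (x / m) * deriv g (x / m) / g (x / m)"
proof -
  have "\<And>t. t > 0 \<Longrightarrow> (g has_real_derivative deriv g t) (at t)"
    using diff DERIV_deriv_iff_real_differentiable by blast
  then have "((\<lambda>a. g a * g (x / a)) has_real_derivative
      deriv g m * g (x / m) - g m * deriv g (x / m) * x / m\<^sup>2) (at m)"
    using \<open>x > 0\<close> \<open>m > 0\<close> by (intro has_real_derivative_mult_reflect) auto
  then have "deriv g m * g (x / m) - g m * deriv g (x / m) * x / m\<^sup>2 = 0"
    using \<open>m > 0\<close> by (rule DERIV_local_max) (use max in auto)
  then have "m * deriv g m * g (x / m) = (x / m) * deriv g (x / m) * g m"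
    using \<open>m > 0\<close> by (simp add: field_simps power2_eq_square)
  moreover have "g m \<noteq> 0" "g (x / m) \<noteq> 0" using pos[of m] pos[of "x / m"] \<open>m > 0\<close> \<open>x > 0\<close> by auto
  ultimately show ?thesis by (subst frac_eq_eq) (simp_all add: mult_ac)
qed

lemma continuous_on_mult_reflect:
  fixes g :: "real \<Rightarrow> real"
  assumes "\<And>t. t > 0 \<Longrightarrow> isCont g t" and "x > 0"
  shows "continuous_on {0<..} (\<lambda>a. g a * g (x / a))"
proof (intro continuous_at_imp_continuous_on ballI)
  fix a :: real assume "a \<in> {0<..}"
  then have "isCont g a" "isCont g (x / a)" using assms by auto
  then show "isCont (\<lambda>a. g a * g (x / a)) a" using \<open>a \<in> {0<..}\<close>
    by (auto intro!: continuous_intros continuous_at_compose[of _ "\<lambda>a. x / a" g, unfolded o_def])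
qed

lemma continuous_on_pos_reals_attains_sup:
  fixes f :: "real \<Rightarrow> real"
  assumes cont: "continuous_on {0<..} f"
    and lim0: "(f \<longlongrightarrow> l) (at_right 0)" and lim_top: "(f \<longlongrightarrow> l) at_top"
    and "p > 0" "f p > l"
  obtains c where "c > 0" "\<And>y. y > 0 \<Longrightarrow> f y \<le> f c"
proof -
  obtain b where "b > 0" and b: "\<And>y. y > 0 \<Longrightarrow> y < b \<Longrightarrow> f y < f p"
    using order_tendstoD(2)[OF lim0 \<open>f p > l\<close>] unfolding eventually_at_right_field by auto
  obtain R where R: "\<And>y. y \<ge> R \<Longrightarrow> f y < f p"
    using order_tendstoD(2)[OF lim_top \<open>f p > l\<close>] unfolding eventually_at_top_linorder by auto
  define d where "d = min b p"
  define R' where "R' = max R p"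
  have "d > 0" "p \<in> {d..R'}" using \<open>b > 0\<close> \<open>p > 0\<close> unfolding d_def R'_def by auto
  moreover have "continuous_on {d..R'} f"
    using \<open>d > 0\<close> by (auto intro: continuous_on_subset[OF cont])
  ultimately obtain c where c: "c \<in> {d..R'}" "\<And>y. y \<in> {d..R'} \<Longrightarrow> f y \<le> f c"
    using continuous_attains_sup[of "{d..R'}" f] by auto
  show thesis
  proof
    show "c > 0" using c(1) \<open>d > 0\<close> by simp
    show "f y \<le> f c" if "y > 0" for y
    proof (cases "y \<in> {d..R'}")
      case False
      then have "f y < f p" using b R \<open>y > 0\<close> unfolding d_def R'_def by force
      then show ?thesis using c(2)[OF \<open>p \<in> {d..R'}\<close>] by simp
    qed (use c in auto)
  qed
qed

theorem lemma20:
  fixes g :: "real \<Rightarrow> real" and x :: real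
  assumes nonneg: "\<And>t. t > 0 \<Longrightarrow> g t \<ge> 0"
    and conc: "concave_on {0<..} g"
    and diff: "\<And>t. t > 0 \<Longrightarrow> g differentiable (at t)"
    and xpos: "x > 0"
    and lim0: "((\<lambda>a. g a * g (x / a)) \<longlongrightarrow> 0) (at_right 0)"
    and liminf: "((\<lambda>a. g a * g (x / a)) \<longlongrightarrow> 0) at_top"
    and inj: "inj_on (\<lambda>t. t * deriv g t / g t) {0<..}"
  shows "\<forall>a>0. a \<noteq> sqrt x \<longrightarrow> g a * g (x / a) < g (sqrt x) * g (x / sqrt x)"
proof -
  define E where "E = (\<lambda>a. g a * g (x / a))"
  have "g 1 \<noteq> 0 \<or> g 2 \<noteq> 0" using inj_onD[OF inj, of 1 2] by auto
  then have pos: "\<And>t. t > 0 \<Longrightarrow> g t > 0"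
    using concave_on_pos_reals_pos[OF conc nonneg] by (metis zero_less_one zero_less_numeral)
  have maximiser: "m = sqrt x" if "m > 0" and max: "\<And>y. y > 0 \<Longrightarrow> E y \<le> E m" for m
  proof -
    have "m * deriv g m / g m = (x / m) * deriv g (x / m) / g (x / m)"
      using max_mult_reflect_balance[OF diff pos xpos \<open>m > 0\<close>] max unfolding E_def by blast
    then have "m = x / m" by (rule inj_onD[OF inj]) (use \<open>m > 0\<close> xpos in auto)
    then have "m\<^sup>2 = x" using \<open>m > 0\<close> by (simp add: field_simps power2_eq_square)
    then show ?thesis using \<open>m > 0\<close> by (simp add: real_sqrt_unique)
  qed
  have "continuous_on {0<..} E"
    unfolding E_def using diff xpos by (intro continuous_on_mult_reflect differentiable_imp_continuous_within)
  moreover have "(E \<longlongrightarrow> 0) (at_right 0)" "(E \<longlongrightarrow> 0) at_top"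
    using lim0 liminf unfolding E_def .
  moreover have "E (sqrt x) > 0" unfolding E_def using pos xpos by simp
  ultimately obtain c where "c > 0" and "\<And>y. y > 0 \<Longrightarrow> E y \<le> E c"
    using continuous_on_pos_reals_attains_sup[of E 0 "sqrt x"] xpos by auto
  then have sup: "\<And>y. y > 0 \<Longrightarrow> E y \<le> E (sqrt x)" using maximiser by blast
  show ?thesis
  proof (intro allI impI)
    fix a :: real assume "a > 0" "a \<noteq> sqrt x"
    then have "E a \<noteq> E (sqrt x)" using maximiser[of a] sup by auto
    with sup[OF \<open>a > 0\<close>] show "g a * g (x / a) < g (sqrt x) * g (x / sqrt x)"
      unfolding E_def by simp
  qed
qed

end
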